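(* Fix $u$ and values $B_u>0$, $R_u^S>0$, $F_u>0$, and write $c_u=B_u r_u$. Define $\eta_u^{\mathrm{opt}}\in[0,1]$, $T_u^{\eta\text{-opt}}$ and $V_u^{\eta\text{-opt}}$ by the following six exhaustive cases: 1. If $c_u<R_u^S$: $\eta_u^{\mathrm{opt}}=0$, $T_u^{\eta\text{-opt}}=\frac{D_u}{c_u}$, $V_u^{\eta\text{-opt}}=0$. 2. If $R_u^S\le c_u<\frac{R_u^S}{\zeta_u}$ and $\frac{F_u}{\rho_u}<\frac{c_u-R_u^S}{1-\zeta_u}$: $\eta_u^{\mathrm{opt}}=\frac{F_u}{F_u(1-\zeta_u)+\rho_uR_u^S}$, $T_u^{\eta\text{-opt}}=\frac{D_u\rho_u}{F_u(1-\zeta_u)+\rho_uR_u^S}$, $V_u^{\eta\text{-opt}}=\frac{D_u}{c_u}\left[c_u-R_u^S-(1-\zeta_u)\frac{F_u}{\rho_u}\right]$. 3. If $R_u^S\le c_u<\frac{R_u^S}{\zeta_u}$ and $\frac{F_u}{\rho_u}\ge\frac{c_u-R_u^S}{1-\zeta_u}$: $\eta_u^{\mathrm{opt}}=\frac{c_u-R_u^S}{(1-\zeta_u)c_u}$, $T_u^{\eta\text{-opt}}=\frac{D_u}{c_u}$, $V_u^{\eta\text{-opt}}=0$. 4. If $c_u\ge\frac{R_u^S}{\zeta_u}$ and $\frac{F_u}{\rho_u}<\frac{R_u^S}{\zeta_u}$: $\eta_u^{\mathrm{opt}}=\frac{F_u}{F_u(1-\zeta_u)+\rho_uR_u^S}$,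 $T_u^{\eta\text{-opt}}=\frac{D_u\rho_u}{F_u(1-\zeta_u)+\rho_uR_u^S}$, $V_u^{\eta\text{-opt}}=\frac{D_u}{c_u}\left[c_u-R_u^S-(1-\zeta_u)\frac{F_u}{\rho_u}\right]$. 5. If $c_u\ge\frac{R_u^S}{\zeta_u}$ and $\frac{R_u^S}{\zeta_u}\le\frac{F_u}{\rho_u}<c_u$: $\eta_u^{\mathrm{opt}}=1$, $T_u^{\eta\text{-opt}}=\frac{\zeta_uD_u}{R_u^S}$, $V_u^{\eta\text{-opt}}=\frac{D_u}{c_u}\left[c_u-R_u^S-(1-\zeta_u)\frac{F_u}{\rho_u}\right]$. 6. If $c_u\ge\frac{R_u^S}{\zeta_u}$ and $\frac{F_u}{\rho_u}\ge c_u$: $\eta_u^{\mathrm{opt}}=1$, $T_u^{\eta\text{-opt}}=\frac{\zeta_uD_u}{R_u^S}$, $V_u^{\eta\text{-opt}}=\frac{D_u}{c_u}(\zeta_uc_u-R_u^S)$. Then $T_u(B_u,R_u^S,F_u,\eta_u^{\mathrm{opt}})=T_u^{\eta\text{-opt}}$, $V_u(B_u,R_u^S,F_u,\eta_u^{\mathrm{opt}})=V_u^{\eta\text{-opt}}$, and for every $\eta_u\in[0,1]$, $T_u(B_u,R_u^S,F_u,\eta_u^{\mathrm{opt}})\le T_u(B_u,R_u^S,F_u,\eta_u)$ and $V_u(B_u,R_u^S,F_u,\eta_u^{\mathrm{opt}})\le V_u(B_u,R_u^S,F_u,\eta_u)$.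
   Context: There are users $u=1,\dots,U$, each with constants $D_u>0$ (data size), $r_u>0$ (spectral efficiency), $\rho_u>0$ (computing intensity) and $\zeta_u\in(0,1)$ (computing output-to-input ratio). For $B_u>0$, $R_u^S>0$, $F_u>0$, $\eta_u\in[0,1]$, write $c_u=B_ur_u$ and define $T_u(B_u,R_u^S,F_u,\eta_u)$ and $V_u(B_u,R_u^S,F_u,\eta_u)$ piecewise: (a) if $\eta_uc_u\ge F_u/\rho_u$, $\zeta_uF_u/\rho_u+(1-\eta_u)c_u\ge R_u^S$, $F_u/\rho_u\ge\frac{\eta_uR_u^S}{\zeta_u\eta_u+1-\eta_u}$: $T_u=\frac{D_u}{R_u^S}(\zeta_u\eta_u+1-\eta_u)$, $V_u=\frac{D_u}{c_u}[c_u-R_u^S-(1-\zeta_u)\frac{F_u}{\rho_u}]$; (b) if $\eta_uc_u\ge F_u/\rho_u$, $\zeta_uF_u/\rho_u+(1-\eta_u)c_u\ge R_u^S$, $F_u/\rho_u<\frac{\eta_uR_u^S}{\zeta_u\eta_u+1-\eta_u}$: $T_u=\frac{\eta_uD_u\rho_u}{F_u}$, $V_u=\frac{D_u}{c_u}[c_u-R_u^S-(1-\zeta_u)\frac{F_u}{\rho_u}]$; (c) if $\eta_uc_u\ge F_u/\rho_u$, $\zeta_uF_u/\rho_u+(1-\eta_u)c_u< R_u^S$: $T_u=\frac{\eta_uD_u\rho_u}{F_u}$, $V_u=\frac{D_u}{c_u}(\eta_uc_u-\frac{F_u}{\rho_u})$; (d) if $\eta_uc_u< F_u/\rho_u$,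 $(\zeta_u\eta_u+1-\eta_u)c_u\ge R_u^S$: $T_u=\frac{D_u}{R_u^S}(\zeta_u\eta_u+1-\eta_u)$, $V_u=\frac{D_u}{c_u}[(\zeta_u\eta_u+1-\eta_u)c_u-R_u^S]$; (e) if $\eta_uc_u< F_u/\rho_u$, $(\zeta_u\eta_u+1-\eta_u)c_u< R_u^S$: $T_u=\frac{D_u}{c_u}$, $V_u=0$. *)

theory Defs
  imports Complex_Main
begin

text \<open>Single user u with constants D (data size), r (spectral efficiency),
  rho (computing intensity), zeta (output-to-input ratio). Variables B, RS, F, eta.
  c = B * r.\<close>

definition Tu :: "real \<Rightarrow> real \<Rightarrow> real \<Rightarrow> real \<Rightarrow> real \<Rightarrow> real \<Rightarrow> real \<Rightarrow> real \<Rightarrow> real" where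
  "Tu D r \<rho> \<zeta> B RS F \<eta> =
    (let c = B * r in
     if \<eta> * c \<ge> F / \<rho> then
       (if \<zeta> * F / \<rho> + (1 - \<eta>) * c \<ge> RS then
          (if F / \<rho> \<ge> \<eta> * RS / (\<zeta> * \<eta> + 1 - \<eta>)
           then D / RS * (\<zeta> * \<eta> + 1 - \<eta>)
           else \<eta> * D * \<rho> / F)
        else \<eta> * D * \<rho> / F)
     else
       (if (\<zeta> * \<eta> + 1 - \<eta>) * c \<ge> RS
        then D / RS * (\<zeta> * \<eta> + 1 - \<eta>)
        else D / c))"

definition Vu :: "real \<Rightarrow> real \<Rightarrow> real \<Rightarrow> real \<Rightarrow> real \<Rightarrow> real \<Rightarrow> real \<Rightarrow> real \<Rightarrow> real" where
  "Vu D r \<rho> \<zeta> B RS F \<eta> =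
    (let c = B * r in
     if \<eta> * c \<ge> F / \<rho> then
       (if \<zeta> * F / \<rho> + (1 - \<eta>) * c \<ge> RS then
          D / c * (c - RS - (1 - \<zeta>) * (F / \<rho>))
        else D / c * (\<eta> * c - F / \<rho>))
     else
       (if (\<zeta> * \<eta> + 1 - \<eta>) * c \<ge> RS
        then D / c * ((\<zeta> * \<eta> + 1 - \<eta>) * c - RS)
        else 0))"

definition opt_triple :: "real \<Rightarrow> real \<Rightarrow> real \<Rightarrow> real \<Rightarrow> real \<Rightarrow> real \<Rightarrow> real \<Rightarrow> real \<times> real \<times> real" where
  "opt_triple D r \<rho> \<zeta> B RS F =
    (let c = B * r in
     if c < RS then (0, D / c, 0)
     else if c < RS / \<zeta> then
       (if F / \<rho> < (c - RS) / (1 - \<zeta>)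
        then (F / (F * (1 - \<zeta>) + \<rho> * RS), D * \<rho> / (F * (1 - \<zeta>) + \<rho> * RS),
              D / c * (c - RS - (1 - \<zeta>) * (F / \<rho>)))
        else ((c - RS) / ((1 - \<zeta>) * c), D / c, 0))
     else if F / \<rho> < RS / \<zeta> then
       (F / (F * (1 - \<zeta>) + \<rho> * RS), D * \<rho> / (F * (1 - \<zeta>) + \<rho> * RS),
        D / c * (c - RS - (1 - \<zeta>) * (F / \<rho>)))
     else if F / \<rho> < c then
       (1, \<zeta> * D / RS, D / c * (c - RS - (1 - \<zeta>) * (F / \<rho>)))
     else (1, \<zeta> * D / RS, D / c * (\<zeta> * c - RS)))"

definition eta_opt where "eta_opt D r \<rho> \<zeta> B RS F = fst (opt_triple D r \<rho> \<zeta> B RS F)"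
definition T_opt where "T_opt D r \<rho> \<zeta> B RS F = fst (snd (opt_triple D r \<rho> \<zeta> B RS F))"
definition V_opt where "V_opt D r \<rho> \<zeta> B RS F = snd (snd (opt_triple D r \<rho> \<zeta> B RS F))"

end

theory Submission imports Defs begin

text \<open>After dividing T by D and V by D/c, both depend only on c, RS, f = F/\<rho>, \<zeta> and \<eta>.
  For every \<eta> \<in> [0,1] the normalised T is at least each of 1/c, \<zeta>/RS and 1/(f(1-\<zeta>)+RS),
  and the normalised V is at least each of 0, c - RS - (1-\<zeta>)f and \<zeta>c - RS. In each of the
  six cases the proposed \<eta> attains one of the T-bounds and one of the V-bounds, hence it
  minimises both simultaneously.\<close>

definition T_norm :: "real \<Rightarrow> real \<Rightarrow> real \<Rightarrow> real \<Rightarrow> real \<Rightarrow> real" where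
  "T_norm c R f z e =
    (if e*c \<ge> f then
       (if z*f + (1-e)*c \<ge> R then (if f \<ge> e*R/(z*e+1-e) then (z*e+1-e)/R else e/f) else e/f)
     else (if (z*e+1-e)*c \<ge> R then (z*e+1-e)/R else 1/c))"

definition V_norm :: "real \<Rightarrow> real \<Rightarrow> real \<Rightarrow> real \<Rightarrow> real \<Rightarrow> real" where
  "V_norm c R f z e =
    (if e*c \<ge> f then (if z*f + (1-e)*c \<ge> R then c - R - (1-z)*f else e*c - f)
     else (if (z*e+1-e)*c \<ge> R then (z*e+1-e)*c - R else 0))"

definition opt_norm :: "real \<Rightarrow> real \<Rightarrow> real \<Rightarrow> real \<Rightarrow> real \<times> real \<times> real" where
  "opt_norm c R f z =
    (if c < R then (0, 1/c, 0)
     else if c < R/z then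
       (if f < (c-R)/(1-z) then (f/(f*(1-z)+R), 1/(f*(1-z)+R), c - R - (1-z)*f)
        else ((c-R)/((1-z)*c), 1/c, 0))
     else if f < R/z then (f/(f*(1-z)+R), 1/(f*(1-z)+R), c - R - (1-z)*f)
     else if f < c then (1, z/R, c - R - (1-z)*f)
     else (1, z/R, z*c - R))"

lemma Tu_eq_T_norm:
  assumes "\<rho> > 0" "B*r > 0"
  shows "Tu D r \<rho> z B R F e = D * T_norm (B*r) R (F/\<rho>) z e"
proof -
  have "z*F/\<rho> = z*(F/\<rho>)" "\<And>s. D/R*s = D*(s/R)" "e*D*\<rho>/F = D*(e/(F/\<rho>))"
    "D/(B*r) = D*(1/(B*r))"
    using assms by simp_all
  then show ?thesis
    unfolding Tu_def T_norm_def Let_def if_distrib[of "\<lambda>x. D*x"] by (simp only:)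
qed

lemma Vu_eq_V_norm: "Vu D r \<rho> z B R F e = D/(B*r) * V_norm (B*r) R (F/\<rho>) z e"
proof -
  have "z*F/\<rho> = z*(F/\<rho>)" by simp
  then show ?thesis
    unfolding Vu_def V_norm_def Let_def if_distrib[of "\<lambda>x. D/(B*r)*x"] by simp
qed

lemma opt_triple_eq_opt_norm:
  assumes "\<rho> > 0"
  shows "opt_triple D r \<rho> z B R F =
    (let (h, t, v) = opt_norm (B*r) R (F/\<rho>) z in (h, D*t, D/(B*r)*v))"
proof -
  have "F/(F*(1-z)+\<rho>*R) = (F/\<rho>)/((F/\<rho>)*(1-z)+R)"
    "D*\<rho>/(F*(1-z)+\<rho>*R) = D*(1/((F/\<rho>)*(1-z)+R))"
    using assms by (simp_all add: field_simps)
  then show ?thesis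
    unfolding opt_triple_def opt_norm_def Let_def by simp
qed

context
  fixes c R f z :: real
  assumes c: "c > 0" and R: "R > 0" and f: "f > 0" and z: "0 < z" "z < 1"
begin

text \<open>\<open>z*e + 1 - e\<close> is the size, relative to the input, of the data still to be sent when
  a share \<open>e\<close> is computed locally with output ratio \<open>z\<close>.\<close>

lemma mix_pos: "0 \<le> e \<Longrightarrow> e \<le> 1 \<Longrightarrow> z*e + 1 - e > 0"
proof -
  assume "0 \<le> e" "e \<le> 1"
  then have "(1-z)*e \<le> (1-z)*1" using z by (intro mult_left_mono) auto
  then show ?thesis using z by (simp add: algebra_simps)
qed

lemma mix_ge_zeta: "0 \<le> e \<Longrightarrow> e \<le> 1 \<Longrightarrow> z*e + 1 - e \<ge> z"
proof -
  assume "0 \<le> e" "e \<le> 1"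
  then have "(1-z)*(1-e) \<ge> 0" using z by simp
  then show ?thesis by (simp add: algebra_simps)
qed

lemma mix_f_le_eta_R:
  assumes e: "0 \<le> e" "e \<le> 1" and "e*c \<ge> f" "\<not> z*f + (1-e)*c \<ge> R"
  shows "(z*e+1-e)*f \<le> e*R"
proof -
  have "e*R \<ge> e*(z*f + (1-e)*c)" using assms by (simp add: mult_left_mono)
  moreover have "(1-e)*(e*c) \<ge> (1-e)*f" using assms by (simp add: mult_left_mono)
  ultimately show ?thesis by (simp add: algebra_simps)
qed

lemma T_norm_ge_inv_c:
  assumes e: "0 \<le> e" "e \<le> 1"
  shows "T_norm c R f z e \<ge> 1/c"
proof -
  have mix: "(z*e+1-e)*c \<ge> R" if "e*c \<ge> f" "z*f + (1-e)*c \<ge> R"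
  proof -
    have "z*f \<le> z*(e*c)" using that z by simp
    then show ?thesis using that by (simp add: algebra_simps)
  qed
  have "R \<le> (z*e+1-e)*c \<Longrightarrow> 1/c \<le> (z*e+1-e)/R" "f \<le> e*c \<Longrightarrow> 1/c \<le> e/f"
    using c R f by (simp_all add: field_simps)
  then show ?thesis unfolding T_norm_def using mix by auto
qed

lemma T_norm_ge_zeta_div_R:
  assumes e: "0 \<le> e" "e \<le> 1"
  shows "T_norm c R f z e \<ge> z/R"
proof -
  have "\<not> f \<ge> e*R/(z*e+1-e) \<Longrightarrow> (z*e+1-e)*f < e*R"
    using mix_pos[OF e] by (simp add: field_simps)
  moreover have "z/R \<le> (z*e+1-e)/R" using mix_ge_zeta[OF e] R by (simp add: divide_right_mono)
  moreover have "z*f \<le> e*R \<Longrightarrow> z/R \<le> e/f" "z*c \<le> R \<Longrightarrow> z/R \<le> 1/c"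
    using R f c by (simp_all add: field_simps)
  moreover have "z*f \<le> (z*e+1-e)*f" "z*c \<le> (z*e+1-e)*c"
    using mix_ge_zeta[OF e] f c by simp_all
  ultimately show ?thesis unfolding T_norm_def using mix_f_le_eta_R[OF e] by auto
qed

lemma T_norm_ge_inv_K:
  assumes e: "0 \<le> e" "e \<le> 1"
  shows "T_norm c R f z e \<ge> 1/(f*(1-z)+R)"
proof -
  define K where "K = f*(1-z) + R"
  have K: "K > 0" unfolding K_def using f z R by (intro add_pos_pos mult_pos_pos) auto
  have at_mix: "1/K \<le> (z*e+1-e)/R" if "(z*e+1-e)*f \<ge> e*R"
  proof -
    have "(z*e+1-e)*K = ((z*e+1-e)*f)*(1-z) + (z*e+1-e)*R" unfolding K_def by (simp add: algebra_simps)
    also have "\<dots> \<ge> (e*R)*(1-z) + (z*e+1-e)*R" using that z by (simp add: mult_right_mono)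
    finally have "(z*e+1-e)*K \<ge> R" by (simp add: algebra_simps)
    then show ?thesis using K R by (simp add: field_simps)
  qed
  have at_eta: "1/K \<le> e/f" if "(z*e+1-e)*f \<le> e*R"
  proof -
    have "e*K = e*f*(1-z) + e*R" unfolding K_def by (simp add: algebra_simps)
    also have "\<dots> \<ge> e*f*(1-z) + (z*e+1-e)*f" using that by simp
    finally have "e*K \<ge> f" by (simp add: algebra_simps)
    then show ?thesis using K f by (simp add: field_simps)
  qed
  have at_inv_c: "1/K \<le> 1/c" if "e*c < f" "\<not> (z*e+1-e)*c \<ge> R"
  proof -
    have "(1-z)*(e*c) \<le> (1-z)*f" using that z by simp
    then have "c \<le> K" unfolding K_def using that by (simp add: algebra_simps)
    then show ?thesis using K c by (simp add: field_simps)
  qed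
  have mix_f: "(z*e+1-e)*f \<ge> e*R" if "e*c < f" "(z*e+1-e)*c \<ge> R"
  proof -
    have "(z*e+1-e)*f \<ge> (z*e+1-e)*(e*c)" using that mix_pos[OF e] by simp
    moreover have "e*((z*e+1-e)*c) \<ge> e*R" using that e by (simp add: mult_left_mono)
    ultimately show ?thesis by (simp add: algebra_simps)
  qed
  have "f \<ge> e*R/(z*e+1-e) \<longleftrightarrow> (z*e+1-e)*f \<ge> e*R"
    using mix_pos[OF e] by (simp add: field_simps)
  then show ?thesis
    unfolding T_norm_def K_def[symmetric]
    using at_mix at_eta at_inv_c mix_f mix_f_le_eta_R[OF e] by (auto simp del: divide_le_0_iff)
qed

lemma V_norm_nonneg:
  assumes e: "0 \<le> e" "e \<le> 1"
  shows "V_norm c R f z e \<ge> 0"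
proof -
  have "e*c - f + (z*f + (1-e)*c - R) = c - R - (1-z)*f" by (simp add: algebra_simps)
  then show ?thesis using mix_pos[OF e] c unfolding V_norm_def by auto
qed

lemma V_norm_ge_c_minus:
  "V_norm c R f z e \<ge> c - R - (1-z)*f"
proof -
  have "e*c - f + (z*f + (1-e)*c - R) = c - R - (1-z)*f"
    "c - R - (1-z)*f = (z*e+1-e)*c - R - (1-z)*(f - e*c)" by (simp_all add: algebra_simps)
  moreover have "e*c < f \<Longrightarrow> (1-z)*(f - e*c) > 0" using z by simp
  ultimately show ?thesis unfolding V_norm_def by auto
qed

lemma V_norm_ge_zeta_c_minus:
  assumes e: "0 \<le> e" "e \<le> 1"
  shows "V_norm c R f z e \<ge> z*c - R"
proof -
  have "z*c \<le> (z*e+1-e)*c" using mix_ge_zeta[OF e] c by simp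
  moreover have "e*c \<le> c" using e c by simp
  moreover have "f + z*c \<le> c + z*f" if "e*c \<ge> f"
  proof -
    have "f \<le> c" using that e c by (meson order_trans mult_left_le_one_le less_imp_le)
    then have "(1-z)*f \<le> (1-z)*c" using z by (intro mult_left_mono) auto
    then show ?thesis by (simp add: algebra_simps)
  qed
  ultimately show ?thesis unfolding V_norm_def using z c by (auto simp: algebra_simps)
qed

lemma attains_at_zero:
  assumes "c < R"
  shows "T_norm c R f z 0 = 1/c" "V_norm c R f z 0 = 0"
  using assms f unfolding T_norm_def V_norm_def by auto

lemma attains_at_compute_share:
  assumes cK: "f*(1-z) + R < c" and zf: "z*f < R"
  shows "f/(f*(1-z)+R) \<in> {0..1}" "T_norm c R f z (f/(f*(1-z)+R)) = 1/(f*(1-z)+R)"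
    "V_norm c R f z (f/(f*(1-z)+R)) = c - R - (1-z)*f"
proof -
  define K where "K = f*(1-z) + R"
  have K: "K > 0" unfolding K_def using f z R by (intro add_pos_pos mult_pos_pos) auto
  have "f \<le> K" using zf unfolding K_def by (simp add: algebra_simps)
  then show "f/(f*(1-z)+R) \<in> {0..1}" using K f unfolding K_def[symmetric] by simp
  have Kc: "K < c" using cK K_def by simp
  have "z*(f/K) + 1 - f/K = (z*f + K - f)/K" using K by (simp add: field_simps)
  also have "z*f + K - f = R" unfolding K_def by (simp add: algebra_simps)
  finally have mix: "z*(f/K) + 1 - f/K = R/K" .
  have link: "f/K*c \<ge> f" using K Kc f by (simp add: field_simps)
  have "(R - z*f)*1 \<le> (R - z*f)*(c/K)" using zf K Kc by (intro mult_left_mono) auto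
  moreover have "1 - f/K = (R - z*f)/K" using K unfolding K_def by (simp add: field_simps)
  ultimately have rest: "z*f + (1 - f/K)*c \<ge> R" by simp
  have "f/K*R/(R/K) = f" "(R/K)/R = 1/K" using K R by simp_all
  then show "T_norm c R f z (f/(f*(1-z)+R)) = 1/(f*(1-z)+R)"
    unfolding K_def[symmetric] T_norm_def using link rest mix by simp
  show "V_norm c R f z (f/(f*(1-z)+R)) = c - R - (1-z)*f"
    unfolding K_def[symmetric] V_norm_def using link rest by simp
qed

lemma attains_at_link_share:
  assumes "R \<le> c" "z*c < R" "c \<le> f*(1-z) + R"
  shows "(c-R)/((1-z)*c) \<in> {0..1}" "T_norm c R f z ((c-R)/((1-z)*c)) = 1/c"
    "V_norm c R f z ((c-R)/((1-z)*c)) = 0"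
proof -
  define h where "h = (c-R)/((1-z)*c)"
  have "(1-z)*c > 0" using z c by simp
  then show "(c-R)/((1-z)*c) \<in> {0..1}" using assms by (simp add: field_simps)
  have hc: "h*c = (c-R)/(1-z)" unfolding h_def using c z by (simp add: field_simps)
  have hf: "h*c \<le> f" unfolding hc using assms z by (simp add: field_simps)
  have "(z*h+1-h)*c = c - (1-z)*(h*c)" by (simp add: algebra_simps)
  also have "(1-z)*(h*c) = c - R" unfolding hc using z by simp
  finally have mix: "(z*h+1-h)*c = R" by simp
  have "z*h+1-h = R/c" using mix c by (simp add: field_simps)
  moreover have "(R/c)/R = 1/c" using R by simp
  moreover have "z*f + (1-h)*c = R" if "h*c = f"
  proof -
    have "z*f + (1-h)*c = (z*h+1-h)*c" using that by (simp add: algebra_simps)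
    then show ?thesis using mix by simp
  qed
  moreover have "h*c = f \<Longrightarrow> h*R/(R/c) = f" using R c by (simp add: field_simps)
  moreover have "h*c = f \<Longrightarrow> c - R - (1-z)*f = 0" using hc z by (simp add: field_simps)
  ultimately show "T_norm c R f z ((c-R)/((1-z)*c)) = 1/c"
    "V_norm c R f z ((c-R)/((1-z)*c)) = 0"
    unfolding h_def[symmetric] T_norm_def V_norm_def using hf mix by auto
qed

lemma attains_at_one:
  assumes "R \<le> z*f" "R \<le> z*c"
  shows "T_norm c R f z 1 = z/R" "V_norm c R f z 1 = (if f < c then c - R - (1-z)*f else z*c - R)"
proof -
  have "R/z \<le> f" using assms z by (simp add: field_simps)
  moreover have "c = f \<Longrightarrow> c - R - (1-z)*f = z*c - R" by (simp add: algebra_simps)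
  ultimately show "T_norm c R f z 1 = z/R"
    "V_norm c R f z 1 = (if f < c then c - R - (1-z)*f else z*c - R)"
    using assms unfolding T_norm_def V_norm_def by auto
qed

lemma opt_norm_attains_bounds:
  assumes "opt_norm c R f z = (h, t, v)"
  shows "h \<in> {0..1} \<and> T_norm c R f z h = t \<and> V_norm c R f z h = v
    \<and> t \<in> {1/c, z/R, 1/(f*(1-z)+R)} \<and> v \<in> {0, c - R - (1-z)*f, z*c - R}"
proof -
  have R_lt: "R < R/z" using R z by (simp add: field_simps)
  consider (no_link) "c < R"
    | (low_compute) "R \<le> c" "c < R/z" "f < (c-R)/(1-z)"
    | (low_link) "R \<le> c" "c < R/z" "\<not> f < (c-R)/(1-z)"
    | (high_compute) "R/z \<le> c" "f < R/z"
    | (high_partial) "R/z \<le> c" "R/z \<le> f" "f < c"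
    | (high_full) "R/z \<le> c" "R/z \<le> f" "\<not> f < c"
    by linarith
  then show ?thesis
  proof cases
    case no_link
    then show ?thesis using assms attains_at_zero[OF no_link] unfolding opt_norm_def by auto
  next
    case low_compute
    have zc: "z*c < R" using low_compute z by (simp add: field_simps)
    have fK: "f*(1-z) < c - R" using low_compute z by (simp add: field_simps)
    have "z*(f*(1-z)) \<le> z*(c-R)" using fK z by (intro mult_left_mono) auto
    then have "z*f*(1-z) < R*(1-z)" using zc z by (simp add: algebra_simps)
    then have "z*f < R" using z by simp
    with fK show ?thesis
      using assms low_compute attains_at_compute_share unfolding opt_norm_def by auto
  next
    case low_link
    have "z*c < R" using low_link z by (simp add: field_simps)
    moreover have "c \<le> f*(1-z) + R" using low_link z by (simp add: field_simps)
    ultimately show ?thesis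
      using assms low_link attains_at_link_share unfolding opt_norm_def by auto
  next
    case high_compute
    have zc: "R \<le> z*c" using high_compute z by (simp add: field_simps)
    have zf: "z*f < R" using high_compute z by (simp add: field_simps)
    have "(1-z)*(z*f) < (1-z)*R" using zf z by (intro mult_strict_left_mono) auto
    then have "z*(f*(1-z) + R) < z*c" using zc z zf by (simp add: algebra_simps)
    then have "f*(1-z) + R < c" using z by simp
    with zf show ?thesis
      using assms high_compute R_lt attains_at_compute_share unfolding opt_norm_def by auto
  next
    case high_partial
    have "R \<le> z*f" "R \<le> z*c" using high_partial z by (simp_all add: field_simps)
    then show ?thesis
      using assms high_partial R_lt attains_at_one unfolding opt_norm_def by auto
  next
    case high_full
    have "R \<le> z*f" "R \<le> z*c" using high_full z by (simp_all add: field_simps)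
    then show ?thesis
      using assms high_full R_lt attains_at_one unfolding opt_norm_def by auto
  qed
qed

lemma opt_norm_optimal:
  assumes "opt_norm c R f z = (h, t, v)"
  shows "h \<in> {0..1} \<and> T_norm c R f z h = t \<and> V_norm c R f z h = v
    \<and> (\<forall>e\<in>{0..1}. t \<le> T_norm c R f z e \<and> v \<le> V_norm c R f z e)"
  using opt_norm_attains_bounds[OF assms] T_norm_ge_inv_c T_norm_ge_zeta_div_R T_norm_ge_inv_K
    V_norm_nonneg V_norm_ge_c_minus V_norm_ge_zeta_c_minus
  by fastforce

end

theorem theorem1:
  fixes D r \<rho> \<zeta> B RS F :: real
  assumes "D > 0" "r > 0" "\<rho> > 0" "\<zeta> > 0" "\<zeta> < 1"
    and "B > 0" "RS > 0" "F > 0"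
  shows "eta_opt D r \<rho> \<zeta> B RS F \<in> {0..1}
    \<and> Tu D r \<rho> \<zeta> B RS F (eta_opt D r \<rho> \<zeta> B RS F) = T_opt D r \<rho> \<zeta> B RS F
    \<and> Vu D r \<rho> \<zeta> B RS F (eta_opt D r \<rho> \<zeta> B RS F) = V_opt D r \<rho> \<zeta> B RS F
    \<and> (\<forall>\<eta>\<in>{0..1}.
         Tu D r \<rho> \<zeta> B RS F (eta_opt D r \<rho> \<zeta> B RS F) \<le> Tu D r \<rho> \<zeta> B RS F \<eta>
       \<and> Vu D r \<rho> \<zeta> B RS F (eta_opt D r \<rho> \<zeta> B RS F) \<le> Vu D r \<rho> \<zeta> B RS F \<eta>)"
proof -
  have c: "B*r > 0" and f: "F/\<rho> > 0" using assms by simp_all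
  obtain h t v where hvt: "opt_norm (B*r) RS (F/\<rho>) \<zeta> = (h, t, v)"
    by (metis prod_cases3)
  have opt: "h \<in> {0..1}" "T_norm (B*r) RS (F/\<rho>) \<zeta> h = t" "V_norm (B*r) RS (F/\<rho>) \<zeta> h = v"
    "\<forall>e\<in>{0..1}. t \<le> T_norm (B*r) RS (F/\<rho>) \<zeta> e \<and> v \<le> V_norm (B*r) RS (F/\<rho>) \<zeta> e"
    using opt_norm_optimal[OF c assms(7) f assms(4,5) hvt] by auto
  have eqs: "eta_opt D r \<rho> \<zeta> B RS F = h" "T_opt D r \<rho> \<zeta> B RS F = D*t"
    "V_opt D r \<rho> \<zeta> B RS F = D/(B*r)*v"
    using opt_triple_eq_opt_norm[OF assms(3)] hvt unfolding eta_opt_def T_opt_def V_opt_def by simp_all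
  have "D/(B*r) \<ge> 0" using assms c by simp
  then have scaled: "\<forall>e\<in>{0..1}. D*t \<le> D * T_norm (B*r) RS (F/\<rho>) \<zeta> e
      \<and> D/(B*r)*v \<le> D/(B*r) * V_norm (B*r) RS (F/\<rho>) \<zeta> e"
    using opt(4) assms(1) by (meson mult_left_mono less_imp_le)
  show ?thesis
    unfolding Tu_eq_T_norm[OF assms(3) c] Vu_eq_V_norm eqs using opt(1-3) scaled by simp
qed

end
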